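(* Let $C:2^M\to\mathbb{R}_{\ge0}$ be a monotone normalized cost function and $P_C$ its potential function. Then for every allocation $\vec S$, $P_C(\vec S)\le \mathcal H_n\cdot C(\vec S)$, where $\mathcal H_n=\sum_{k=1}^n \frac1k$.
   Context: Setting. $N=\{1,\dots,n\}$ is a set of players and $M_1,\dots,M_n$ are pairwise disjoint finite sets; $M=\bigcup_i M_i$. An allocation is a vector $\vec S=(S_1,\dots,S_n)$ with $S_i\subseteq M_i$, identified with the subset $\bigcup_i S_i$ of $M$. The potential function of a cost function $C$ is $P_C(\vec S)=\sum_{\emptyset\neq I\subseteq N}\frac{C(\bigcup_{i\in I}S_i)}{|I|\binom{n}{|I|}}$. *)

theory Defs
  imports Complex_Main
begin

definition ground :: "nat \<Rightarrow> (nat \<Rightarrow> 'a set) \<Rightarrow> 'a set" where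
  "ground n M = (\<Union>i\<in>{1..n}. M i)"

definition is_allocation :: "nat \<Rightarrow> (nat \<Rightarrow> 'a set) \<Rightarrow> (nat \<Rightarrow> 'a set) \<Rightarrow> bool" where
  "is_allocation n M S \<longleftrightarrow> (\<forall>i\<in>{1..n}. S i \<subseteq> M i)"

definition monotone_normalized_cost :: "'a set \<Rightarrow> ('a set \<Rightarrow> real) \<Rightarrow> bool" where
  "monotone_normalized_cost G C \<longleftrightarrow>
     C {} = 0 \<and> (\<forall>A. A \<subseteq> G \<longrightarrow> C A \<ge> 0) \<and>
     (\<forall>A B. A \<subseteq> B \<and> B \<subseteq> G \<longrightarrow> C A \<le> C B)"

definition potential :: "nat \<Rightarrow> ('a set \<Rightarrow> real) \<Rightarrow> (nat \<Rightarrow> 'a set) \<Rightarrow> real" where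
  "potential n C S = (\<Sum>I\<in>{I. I \<subseteq> {1..n} \<and> I \<noteq> {}}.
      C (\<Union>i\<in>I. S i) / (real (card I) * real (n choose card I)))"

definition harm :: "nat \<Rightarrow> real" where
  "harm n = (\<Sum>k=1..n. 1 / real k)"

end

theory Submission
  imports Defs
begin

text \<open>Each nonempty coalition I is weighted by 1 / (|I| * binom(n, |I|)), and these weights
  sum to H_n because there are exactly binom(n, k) coalitions of size k. Monotonicity of C
  bounds the cost of every coalition by the cost of the whole allocation.\<close>

lemma sum_nonempty_subsets_by_card:
  fixes g :: "nat \<Rightarrow> 'b::comm_semiring_1"
  assumes "finite A"
  shows "(\<Sum>I\<in>{I. I \<subseteq> A \<and> I \<noteq> {}}. g (card I))
       = (\<Sum>k=1..card A. of_nat (card A choose k) * g k)"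
proof -
  let ?S = "{I. I \<subseteq> A \<and> I \<noteq> {}}"
  have finite_S: "finite ?S"
    using assms by (auto intro: finite_subset[of _ "Pow A"])
  have card_range: "card ` ?S \<subseteq> {1..card A}"
  proof
    fix k assume "k \<in> card ` ?S"
    then obtain I where I: "I \<subseteq> A" "I \<noteq> {}" "k = card I" by auto
    with assms have "finite I" by (blast intro: finite_subset)
    with I assms show "k \<in> {1..card A}"
      by (auto simp: Suc_le_eq card_gt_0_iff intro: card_mono)
  qed
  have "(\<Sum>I\<in>?S. g (card I)) = (\<Sum>k=1..card A. \<Sum>I\<in>{I \<in> ?S. card I = k}. g (card I))"
    using sum.group[OF finite_S _ card_range, of "\<lambda>I. g (card I)"] by simp
  also have "\<dots> = (\<Sum>k=1..card A. of_nat (card A choose k) * g k)"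
  proof (rule sum.cong[OF refl])
    fix k assume k: "k \<in> {1..card A}"
    then have "{I \<in> ?S. card I = k} = {I. I \<subseteq> A \<and> card I = k}" by auto
    then show "(\<Sum>I\<in>{I \<in> ?S. card I = k}. g (card I)) = of_nat (card A choose k) * g k"
      using n_subsets[OF assms, of k] by simp
  qed
  finally show ?thesis .
qed

lemma potential_weights_sum:
  "(\<Sum>I\<in>{I. I \<subseteq> {1..n} \<and> I \<noteq> {}}. 1 / (real (card I) * real (n choose card I))) = harm n"
proof -
  have "(\<Sum>I\<in>{I. I \<subseteq> {1..n} \<and> I \<noteq> {}}. 1 / (real (card I) * real (n choose card I)))
      = (\<Sum>k=1..n. real (n choose k) * (1 / (real k * real (n choose k))))"
    using sum_nonempty_subsets_by_card[of "{1..n}" "\<lambda>k. 1 / (real k * real (n choose k))"]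
    by simp
  also have "\<dots> = (\<Sum>k=1..n. 1 / real k)"
    by (rule sum.cong) auto
  finally show ?thesis unfolding harm_def .
qed

theorem claim3p4:
  fixes n :: nat and M :: "nat \<Rightarrow> 'a set" and C :: "'a set \<Rightarrow> real"
    and S :: "nat \<Rightarrow> 'a set"
  assumes "\<forall>i\<in>{1..n}. finite (M i)"
    and "\<forall>i\<in>{1..n}. \<forall>j\<in>{1..n}. i \<noteq> j \<longrightarrow> M i \<inter> M j = {}"
    and "monotone_normalized_cost (ground n M) C"
    and "is_allocation n M S"
  shows "potential n C S \<le> harm n * C (\<Union>i\<in>{1..n}. S i)"
proof -
  let ?U = "\<Union>i\<in>{1..n}. S i"
  let ?w = "\<lambda>I. 1 / (real (card I) * real (n choose card I))"
  have U_ground: "?U \<subseteq> ground n M"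
    using assms(4) unfolding is_allocation_def ground_def by blast
  have coalition_le: "C (\<Union>i\<in>I. S i) \<le> C ?U" if "I \<subseteq> {1..n}" for I
  proof -
    have "(\<Union>i\<in>I. S i) \<subseteq> ?U" using that by blast
    with U_ground assms(3) show ?thesis unfolding monotone_normalized_cost_def by blast
  qed
  have "potential n C S \<le> (\<Sum>I\<in>{I. I \<subseteq> {1..n} \<and> I \<noteq> {}}. C ?U * ?w I)"
    unfolding potential_def
    by (rule sum_mono) (use coalition_le in \<open>auto intro: divide_right_mono\<close>)
  also have "\<dots> = C ?U * harm n"
    by (simp only: sum_distrib_left[symmetric] potential_weights_sum)
  finally show ?thesis by (simp add: mult.commute)
qed

end
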